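(* Assume $\sum_{i=1}^M b_i<1$ and let $\mathbf r^\star(\epsilon)$ be the energy-scarce solution. Then $\lim_{\epsilon\to0^+}|\bar\Delta(\mathbf r^\star(\epsilon))-\bar\Delta_{\mathrm{opt}}(\epsilon)|=0$, and $$\lim_{\epsilon\to0^+}\bar\Delta_{\mathrm{opt}}(\epsilon)=\sum_{i=1}^M\Big[\frac{w_i}{b_i}+w_i\Big].$$
   Context: Fix an integer $M\ge1$, weights $w_1,\dots,w_M>0$, constants $b_1,\dots,b_M>0$, and $\epsilon>0$. For $\mathbf r\in(0,\infty)^M$ write $S(\mathbf r)=\sum_{i=1}^M r_i$ and define $$\bar\Delta(\mathbf r)=\sum_{l=1}^M \frac{w_l e^{-r_l\epsilon}}{r_l}\, e^{\epsilon S(\mathbf r)}\big(1+S(\mathbf r)\big)+\sum_{l=1}^M w_l,\qquad \sigma_l(\mathbf r)=\frac{(1-e^{-r_l\epsilon})S(\mathbf r)+r_le^{-r_l\epsilon}}{S(\mathbf r)+1}.$$ Problem 1: minimize $\bar\Delta(\mathbf r)$ over $\mathbf r\in(0,\infty)^M$ subject to $\sigma_l(\mathbf r)\le b_l$ for all $l$; its optimal (infimum) value is $\bar\Delta_{\mathrm{opt}}(\epsilon)$. Energy-scarce solution (when $B:=\sum_i b_i<1$): for each $l$ let $$c_l=\frac{2b_l(1-B)^2}{b_l(1-B)^2+\sqrt{b_l^2(1-B)^4+4b_l^2(1-B)^2(B-b_l)\epsilon}},$$ let $x^\star=\frac{\min_l c_l}{1-B}$, $\beta^\star=\sum_{i=1}^M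 \frac{1}{\sqrt{w_i}}$, and set $r^\star_l=\min\{b_l,\beta^\star\sqrt{w_l}\}\,x^\star$. *)

theory Defs
  imports "HOL-Analysis.Analysis"
begin

text \<open>Indices are 0..M-1 (i.e. the set {..<M}); vectors r are functions nat => real,
  only their values on {..<M} matter.\<close>

definition Ssum :: "nat \<Rightarrow> (nat \<Rightarrow> real) \<Rightarrow> real" where
  "Ssum M r = (\<Sum>i<M. r i)"

definition Delta_bar :: "nat \<Rightarrow> (nat \<Rightarrow> real) \<Rightarrow> real \<Rightarrow> (nat \<Rightarrow> real) \<Rightarrow> real" where
  "Delta_bar M w eps r =
     (\<Sum>l<M. w l * exp (- r l * eps) / r l * exp (eps * Ssum M r) * (1 + Ssum M r))
     + (\<Sum>l<M. w l)"

definition sigma :: "nat \<Rightarrow> real \<Rightarrow> (nat \<Rightarrow> real) \<Rightarrow> nat \<Rightarrow> real" where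
  "sigma M eps r l =
     ((1 - exp (- r l * eps)) * Ssum M r + r l * exp (- r l * eps)) / (Ssum M r + 1)"

definition feasible :: "nat \<Rightarrow> (nat \<Rightarrow> real) \<Rightarrow> real \<Rightarrow> (nat \<Rightarrow> real) \<Rightarrow> bool" where
  "feasible M b eps r \<longleftrightarrow> (\<forall>l<M. 0 < r l \<and> sigma M eps r l \<le> b l)"

definition Delta_opt :: "nat \<Rightarrow> (nat \<Rightarrow> real) \<Rightarrow> (nat \<Rightarrow> real) \<Rightarrow> real \<Rightarrow> real" where
  "Delta_opt M w b eps = Inf (Delta_bar M w eps ` {r. feasible M b eps r})"

definition c_coef :: "nat \<Rightarrow> (nat \<Rightarrow> real) \<Rightarrow> real \<Rightarrow> nat \<Rightarrow> real" where
  "c_coef M b eps l =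
     (let B = (\<Sum>i<M. b i) in
      2 * b l * (1 - B)^2 /
      (b l * (1 - B)^2 + sqrt ((b l)^2 * (1 - B)^4 + 4 * (b l)^2 * (1 - B)^2 * (B - b l) * eps)))"

definition r_star :: "nat \<Rightarrow> (nat \<Rightarrow> real) \<Rightarrow> (nat \<Rightarrow> real) \<Rightarrow> real \<Rightarrow> nat \<Rightarrow> real" where
  "r_star M w b eps l =
     (let B = (\<Sum>i<M. b i);
          x = Min (c_coef M b eps ` {..<M}) / (1 - B);
          beta = (\<Sum>i<M. 1 / sqrt (w i))
      in min (b l) (beta * sqrt (w l)) * x)"

end

theory Submission
  imports Defs
begin

text \<open>Write \<open>S = \<Sum>r\<^sub>i\<close> and \<open>B = \<Sum>b\<^sub>i\<close>. Clearing the denominator in \<open>\<sigma>\<^sub>l(r) \<le> b\<^sub>l\<close> and using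
  \<open>r\<^sub>l \<le> S\<close> gives \<open>r\<^sub>l \<le> b\<^sub>l (1 + S)\<close> for every feasible \<open>r\<close>; since also \<open>exp (\<epsilon> (S - r\<^sub>l)) \<ge> 1\<close>,
  every feasible point has \<open>\<Delta>(r) \<ge> \<Sum> (w\<^sub>l/b\<^sub>l + w\<^sub>l)\<close>. Conversely, by \<open>1 - exp (-x) \<le> x\<close> the points
  \<open>r\<^sub>l = b\<^sub>l / (1 - B + \<epsilon> B/(1 - B))\<close> are feasible. This family, and also \<open>r\<^sup>\<star>(\<epsilon>)\<close> (every
  \<open>c\<^sub>l(\<epsilon>) \<rightarrow> 1\<close>, and \<open>\<beta>\<^sup>\<star>\<surd>w\<^sub>l \<ge> 1 > b\<^sub>l\<close>), tends to \<open>b/(1 - B)\<close> as \<open>\<epsilon> \<rightarrow> 0\<close>, and there \<open>\<Delta>\<close> with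
  \<open>\<epsilon> = 0\<close> equals \<open>\<Sum> (w\<^sub>l/b\<^sub>l + w\<^sub>l)\<close>. So the optimum is squeezed to this value, and so is \<open>\<Delta>(r\<^sup>\<star>)\<close>.\<close>

lemma tendsto_Min_image:
  fixes f :: "'i \<Rightarrow> 'a \<Rightarrow> real"
  assumes "finite A" "A \<noteq> {}" "\<And>i. i \<in> A \<Longrightarrow> ((\<lambda>x. f i x) \<longlongrightarrow> l i) F"
  shows "((\<lambda>x. Min ((\<lambda>i. f i x) ` A)) \<longlongrightarrow> Min (l ` A)) F"
  using assms
proof (induction A rule: finite_ne_induct)
  case (singleton x)
  then show ?case by simp
next
  case (insert x A)
  then show ?case by (simp add: tendsto_min)
qed

lemma tendsto_Delta_bar_at_0:
  assumes "\<And>l. l < M \<Longrightarrow> ((\<lambda>e. r e l) \<longlongrightarrow> \<rho> l) (at 0)"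
    and "\<And>l. l < M \<Longrightarrow> \<rho> l \<noteq> 0"
  shows "((\<lambda>e. Delta_bar M w e (r e)) \<longlongrightarrow> Delta_bar M w 0 \<rho>) (at 0)"
  unfolding Delta_bar_def Ssum_def
  by (intro tendsto_intros tendsto_sum) (auto intro!: assms tendsto_intros)

lemma Delta_bar_0_limit_point:
  assumes "\<forall>i<M. b i > 0" "(\<Sum>i<M. b i) < 1"
  shows "Delta_bar M w 0 (\<lambda>l. b l / (1 - (\<Sum>i<M. b i))) = (\<Sum>i<M. w i / b i + w i)"
proof -
  define B where "B = (\<Sum>i<M. b i)"
  have B1: "1 - B > 0" using assms B_def by simp
  have "Ssum M (\<lambda>l. b l / (1 - B)) = B / (1 - B)"
    unfolding Ssum_def B_def by (simp add: sum_divide_distrib)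
  then have S: "1 + Ssum M (\<lambda>l. b l / (1 - B)) = 1 / (1 - B)"
    using B1 by (simp add: field_simps)
  have "w l / (b l / (1 - B)) * (1 / (1 - B)) = w l / b l" if "l < M" for l
  proof -
    have "b l > 0" using assms(1) that by simp
    then show ?thesis using B1 by (simp add: divide_simps)
  qed
  then show ?thesis
    unfolding Delta_bar_def B_def[symmetric] S by (simp add: sum.distrib)
qed

lemma component_le_Ssum:
  assumes "\<forall>i<M. r i \<ge> 0" "l < M"
  shows "r l \<le> Ssum M r"
  unfolding Ssum_def using assms by (intro member_le_sum) auto

lemma feasible_rate_le:
  assumes "feasible M b eps r" "eps \<ge> 0" "l < M"
  shows "r l \<le> b l * (1 + Ssum M r)"
proof -
  define S where "S = Ssum M r"
  have rl: "r l > 0" and sig: "sigma M eps r l \<le> b l"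
    using assms(1,3) unfolding feasible_def by auto
  have rS: "r l \<le> S"
    unfolding S_def using assms(1,3) by (intro component_le_Ssum) (auto simp: feasible_def)
  have "exp (- r l * eps) \<le> 1" using rl assms(2) by simp
  then have "0 \<le> (1 - exp (- r l * eps)) * (S - r l)" using rS by simp
  then have "r l \<le> (1 - exp (- r l * eps)) * S + r l * exp (- r l * eps)"
    by (simp add: algebra_simps)
  also have "\<dots> \<le> b l * (S + 1)"
    using sig rS rl unfolding sigma_def S_def[symmetric] by (simp add: divide_le_eq)
  finally show ?thesis unfolding S_def by (simp add: add.commute)
qed

lemma Delta_bar_ge_feasible:
  assumes "\<forall>i<M. w i > 0" "\<forall>i<M. b i > 0" "eps \<ge> 0" "feasible M b eps r"
  shows "(\<Sum>i<M. w i / b i + w i) \<le> Delta_bar M w eps r"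
proof -
  define S where "S = Ssum M r"
  have "w l / b l \<le> w l * exp (- r l * eps) / r l * exp (eps * S) * (1 + S)"
    if l: "l < M" for l
  proof -
    have rl: "r l > 0" and wl: "w l > 0" and bl: "b l > 0"
      using assms l by (auto simp: feasible_def)
    have rb: "r l \<le> b l * (1 + S)"
      using feasible_rate_le[OF assms(4,3) l] unfolding S_def .
    have rS: "r l \<le> S"
      unfolding S_def using assms(4) l by (intro component_le_Ssum) (auto simp: feasible_def)
    have "exp (- r l * eps) * exp (eps * S) = exp (eps * (S - r l))"
      by (simp add: exp_add[symmetric] algebra_simps)
    also have "\<dots> \<ge> 1" using assms(3) rS by simp
    finally have ex: "exp (- r l * eps) * exp (eps * S) \<ge> 1" .
    have "w l * r l \<le> w l * (b l * (1 + S))" using rb wl by (intro mult_left_mono) auto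
    then have "w l / b l \<le> w l * (1 + S) / r l"
      using rl bl by (simp add: divide_simps algebra_simps)
    also have "\<dots> \<le> w l * (1 + S) / r l * (exp (- r l * eps) * exp (eps * S))"
      using mult_left_mono[OF ex, of "w l * (1 + S) / r l"] rS rl wl by simp
    finally show ?thesis by (simp add: mult_ac)
  qed
  then show ?thesis
    unfolding Delta_bar_def S_def[symmetric] sum.distrib by (intro add_mono sum_mono) auto
qed

lemma feasible_scaled:
  assumes "\<forall>i<M. b i > 0" "eps \<ge> 0" "s > 0"
    and "s * (1 - (\<Sum>i<M. b i) + eps * s * (\<Sum>i<M. b i)) \<le> 1"
  shows "feasible M b eps (\<lambda>l. b l * s)"
proof -
  define B where "B = (\<Sum>i<M. b i)"
  have B0: "B \<ge> 0" unfolding B_def using assms(1) by (intro sum_nonneg) (auto simp: less_imp_le)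
  have S: "Ssum M (\<lambda>l. b l * s) = s * B"
    unfolding Ssum_def B_def by (simp add: sum_distrib_left mult.commute)
  have "sigma M eps (\<lambda>l. b l * s) l \<le> b l" if l: "l < M" for l
  proof -
    define x where "x = b l * s * eps"
    have bl: "b l > 0" using assms(1) l by auto
    have x0: "x \<ge> 0" using x_def bl assms(2,3) by simp
    have blB: "b l * s \<le> s * B" unfolding B_def using assms(1,3) l
      by (simp add: mult.commute, intro mult_left_mono member_le_sum) (auto simp: less_imp_le)
    have ex: "1 - exp (- x) \<le> x" using exp_ge_add_one_self[of "-x"] by simp
    have "(1 - exp (- x)) * (s * B) + b l * s * exp (- x)
        = b l * s + (1 - exp (- x)) * (s * B - b l * s)"
      by (simp add: algebra_simps)
    also have "\<dots> \<le> b l * s + x * (s * B - b l * s)"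
      using ex blB by (intro add_left_mono mult_right_mono) auto
    also have "\<dots> \<le> b l * s + x * (s * B)"
      using x0 bl assms(3) by (intro add_left_mono mult_left_mono) auto
    also have "\<dots> = b l * (s * (1 - B + eps * s * B)) + b l * (s * B)"
      unfolding x_def by (simp add: algebra_simps)
    also have "\<dots> \<le> b l * 1 + b l * (s * B)"
      using assms(4) bl unfolding B_def[symmetric] by (intro add_right_mono mult_left_mono) auto
    finally have "(1 - exp (- x)) * (s * B) + b l * s * exp (- x) \<le> b l * (s * B + 1)"
      by (simp add: algebra_simps)
    moreover have "s * B + 1 > 0" using B0 assms(3) by (simp add: add_nonneg_pos)
    ultimately show ?thesis
      unfolding sigma_def S x_def by (simp add: divide_le_eq mult.commute mult.left_commute)
  qed
  then show ?thesis unfolding feasible_def using assms(1,3) by auto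
qed

lemma c_coef_tendsto_1:
  assumes "\<forall>i<M. b i > 0" "(\<Sum>i<M. b i) < 1" "l < M"
  shows "((\<lambda>e. c_coef M b e l) \<longlongrightarrow> 1) (at 0)"
proof -
  define B where "B = (\<Sum>i<M. b i)"
  define a where "a = b l * (1 - B)^2"
  have a: "a > 0" using assms unfolding a_def B_def by auto
  have "(b l)^2 * (1 - B)^4 = a^2"
    unfolding a_def by (simp add: power_mult_distrib power_mult[symmetric])
  then have c: "c_coef M b e l = 2 * a / (a + sqrt (a^2 + 4 * b l * a * (B - b l) * e))" for e
    unfolding c_coef_def Let_def B_def[symmetric] a_def by (simp add: power2_eq_square algebra_simps)
  have "((\<lambda>e. 2 * a / (a + sqrt (a^2 + 4 * b l * a * (B - b l) * e)))
      \<longlongrightarrow> 2 * a / (a + sqrt (a^2 + 4 * b l * a * (B - b l) * 0))) (at 0)"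
    using a by (intro tendsto_intros) auto
  then show ?thesis using a unfolding c by simp
qed

lemma r_star_tendsto:
  assumes "M \<ge> 1" "\<forall>i<M. w i > 0" "\<forall>i<M. b i > 0" "(\<Sum>i<M. b i) < 1" "l < M"
  shows "((\<lambda>e. r_star M w b e l) \<longlongrightarrow> b l / (1 - (\<Sum>i<M. b i))) (at 0)"
proof -
  define B where "B = (\<Sum>i<M. b i)"
  define beta where "beta = (\<Sum>i<M. 1 / sqrt (w i))"
  have ne: "{..<M} \<noteq> {}" using assms(1) by (auto simp: lessThan_empty_iff)
  have "((\<lambda>e. Min ((\<lambda>i. c_coef M b e i) ` {..<M})) \<longlongrightarrow> Min ((\<lambda>i. 1::real) ` {..<M})) (at 0)"
    using ne c_coef_tendsto_1[OF assms(3,4)] by (intro tendsto_Min_image) auto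
  then have Min_c: "((\<lambda>e. Min ((\<lambda>i. c_coef M b e i) ` {..<M})) \<longlongrightarrow> 1) (at 0)"
    using ne by simp
  have "b l \<le> B" unfolding B_def using assms(3,5)
    by (intro member_le_sum) (auto simp: less_imp_le)
  moreover have "1 / sqrt (w l) \<le> beta" unfolding beta_def using assms(2,5)
    by (intro member_le_sum) auto
  then have "1 \<le> beta * sqrt (w l)" using assms(2,5) by (simp add: divide_le_eq)
  ultimately have "min (b l) (beta * sqrt (w l)) = b l" using assms(4) unfolding B_def by simp
  moreover have "((\<lambda>e. b l * (Min ((\<lambda>i. c_coef M b e i) ` {..<M}) / (1 - B)))
      \<longlongrightarrow> b l * (1 / (1 - B))) (at 0)"
    using assms(4) unfolding B_def by (intro tendsto_intros Min_c) auto
  ultimately show ?thesis unfolding r_star_def Let_def B_def[symmetric] beta_def[symmetric] by simp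
qed

lemma Delta_bar_r_star_tendsto:
  assumes "M \<ge> 1" "\<forall>i<M. w i > 0" "\<forall>i<M. b i > 0" "(\<Sum>i<M. b i) < 1"
  shows "((\<lambda>e. Delta_bar M w e (r_star M w b e)) \<longlongrightarrow> (\<Sum>i<M. w i / b i + w i)) (at 0)"
proof -
  have "((\<lambda>e. Delta_bar M w e (r_star M w b e))
      \<longlongrightarrow> Delta_bar M w 0 (\<lambda>l. b l / (1 - (\<Sum>i<M. b i)))) (at 0)"
    using r_star_tendsto[OF assms] assms(3,4) by (intro tendsto_Delta_bar_at_0) auto
  then show ?thesis using Delta_bar_0_limit_point[OF assms(3,4)] by simp
qed

lemma Delta_opt_tendsto:
  assumes "\<forall>i<M. w i > 0" "\<forall>i<M. b i > 0" "(\<Sum>i<M. b i) < 1"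
  shows "((\<lambda>e. Delta_opt M w b e) \<longlongrightarrow> (\<Sum>i<M. w i / b i + w i)) (at_right 0)"
proof -
  define B where "B = (\<Sum>i<M. b i)"
  define L where "L = (\<Sum>i<M. w i / b i + w i)"
  define s where "s = (\<lambda>e. 1 / (1 - B + e * (B / (1 - B))))"
  have B1: "1 - B > 0" and B0: "B \<ge> 0"
    using assms(2,3) unfolding B_def by (auto intro!: sum_nonneg simp: less_imp_le)
  have feasible: "feasible M b e (\<lambda>l. b l * s e)" if "e > 0" for e
  proof (rule feasible_scaled[OF assms(2)])
    have den: "1 - B + e * (B / (1 - B)) > 0" using B0 B1 that by (simp add: add_pos_nonneg)
    then show "s e > 0" unfolding s_def by simp
    have "s e \<le> 1 / (1 - B)"
      unfolding s_def using den B0 B1 that by (intro divide_left_mono) auto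
    then have "s e * B \<le> B / (1 - B)" using mult_right_mono[OF _ B0] by fastforce
    then have "e * (s e * B) \<le> e * (B / (1 - B))" using that by (intro mult_left_mono) auto
    then have "s e * (1 - B + e * s e * B) \<le> s e * (1 - B + e * (B / (1 - B)))"
      using \<open>s e > 0\<close> by (intro mult_left_mono) (auto simp: mult.assoc)
    also have "\<dots> = 1" unfolding s_def using den by simp
    finally show "s e * (1 - (\<Sum>i<M. b i) + e * s e * (\<Sum>i<M. b i)) \<le> 1" unfolding B_def .
  qed (use that in auto)
  have lower: "L \<le> Delta_bar M w e r" if "e > 0" "feasible M b e r" for e r
    unfolding L_def using Delta_bar_ge_feasible[OF assms(1,2)] that by simp
  have bounds: "L \<le> Delta_opt M w b e \<and> Delta_opt M w b e \<le> Delta_bar M w e (\<lambda>l. b l * s e)"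
    if "e > 0" for e
    unfolding Delta_opt_def using feasible[OF that] lower[OF that]
    by (auto intro!: cInf_greatest cInf_lower bdd_belowI)
  have "((\<lambda>e. b l * s e) \<longlongrightarrow> b l * (1 / (1 - B + 0 * (B / (1 - B))))) (at 0)" for l
    unfolding s_def using B1 by (intro tendsto_intros) auto
  then have "((\<lambda>e. Delta_bar M w e (\<lambda>l. b l * s e)) \<longlongrightarrow> Delta_bar M w 0 (\<lambda>l. b l / (1 - B))) (at 0)"
    using assms(2) B1 by (intro tendsto_Delta_bar_at_0) auto
  then have "((\<lambda>e. Delta_bar M w e (\<lambda>l. b l * s e)) \<longlongrightarrow> L) (at 0)"
    using Delta_bar_0_limit_point[OF assms(2,3)] unfolding L_def B_def by simp
  then have upper: "((\<lambda>e. Delta_bar M w e (\<lambda>l. b l * s e)) \<longlongrightarrow> L) (at_right 0)"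
    by (rule tendsto_mono[rotated]) (simp add: at_le)
  have "\<forall>\<^sub>F e in at_right 0. L \<le> Delta_opt M w b e"
    and "\<forall>\<^sub>F e in at_right 0. Delta_opt M w b e \<le> Delta_bar M w e (\<lambda>l. b l * s e)"
    using bounds eventually_at_right_less[of 0] by (auto elim!: eventually_mono)
  from tendsto_sandwich[OF this tendsto_const upper] show ?thesis unfolding L_def .
qed

theorem corollary2:
  fixes M :: nat and w b :: "nat \<Rightarrow> real"
  assumes "M \<ge> 1"
    and "\<forall>i<M. w i > 0"
    and "\<forall>i<M. b i > 0"
    and "(\<Sum>i<M. b i) < 1"
  shows "(((\<lambda>eps. \<bar>Delta_bar M w eps (r_star M w b eps) - Delta_opt M w b eps\<bar>)
            \<longlongrightarrow> 0) (at_right 0))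
         \<and> ((\<lambda>eps. Delta_opt M w b eps) \<longlongrightarrow> (\<Sum>i<M. w i / b i + w i)) (at_right 0)"
proof
  have star: "((\<lambda>e. Delta_bar M w e (r_star M w b e)) \<longlongrightarrow> (\<Sum>i<M. w i / b i + w i)) (at_right 0)"
    using Delta_bar_r_star_tendsto[OF assms] by (rule tendsto_mono[rotated]) (simp add: at_le)
  show opt: "((\<lambda>e. Delta_opt M w b e) \<longlongrightarrow> (\<Sum>i<M. w i / b i + w i)) (at_right 0)"
    using Delta_opt_tendsto[OF assms(2-4)] .
  show "((\<lambda>e. \<bar>Delta_bar M w e (r_star M w b e) - Delta_opt M w b e\<bar>) \<longlongrightarrow> 0) (at_right 0)"
    using tendsto_rabs[OF tendsto_diff[OF star opt]] by simp
qed

end
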